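(* Let $G$ be a group generated by elements $g_1,\dots,g_n$ and let $H$ be a cocommutative Hopf algebra over $\Bbbk$. Then every $\varphi\in\mathrm{Hom}_{\mathcal H}(G;H)$ is completely determined by the single element $\varphi_n(g_1,\dots,g_n)\in H^{\otimes n}$; that is, the evaluation map $\varphi\mapsto\varphi_n(g_1,\dots,g_n)$ from $\mathrm{Hom}_{\mathcal H}(G;H)$ to $H^{\otimes n}$ is injective.
   Context: $\Bbbk$ is a field of characteristic $0$. $H$ is a cocommutative Hopf algebra over $\Bbbk$ with multiplication $m$, comultiplication $\Delta$, unit $\eta\colon\Bbbk\to H$, counit $\epsilon\colon H\to\Bbbk$ and antipode $S$. For a group $G$, $\mathrm{Hom}_{\mathcal H}(G;H)$ denotes the set of sequences $\varphi=(\varphi_k)_{k\ge0}$ of functions $\varphi_k\colon G^k\to H^{\otimes k}$ (with $H^{\otimes 0}=\Bbbk$, $\varphi_0=1$) satisfying, for all $k$ and all group elements: (1) $\varphi_k$ commutes with the action of $\Sigma_k$ (permuting entries of $G^k$ and tensor factors); (2) $\varphi_k(1,g_1,\dots,g_{k-1})=\eta(1)\otimes\varphi_{k-1}(g_1,\dots,g_{k-1})$; (3) $(\epsilon\otimes\mathrm{id}^{k-1})\varphi_k(g_1,\dots,g_k)=\varphi_{k-1}(g_2,\dots,g_k)$; (4) $\varphi_k(g^{-1},g_1,\dots,g_{k-1})=(S\otimes\mathrm{id}^{k-1})\varphi_k(g,g_1,\dots,g_{k-1})$; (5) $\varphi_k(g,g,g_1,\dots,g_{k-2})=(\Delta\otimes\mathrm{id}^{k-2})\varphi_{k-1}(g,g_1,\dots,g_{k-2})$;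 (6) $\varphi_k(g_1g_2,g_3,\dots,g_{k+1})=(m\otimes\mathrm{id}^{k-1})\varphi_{k+1}(g_1,g_2,\dots,g_{k+1})$. *)

theory Defs
  imports "HOL-Algebra.Generated_Groups" "HOL-Combinatorics.Permutations"
begin

text \<open>
Model of the tensor algebra of a vector space H over a field 'k with basis type 'b:
an element of H^{\<otimes>k} is a finitely supported function 'b list \<Rightarrow> 'k supported on
lists of length k (the basis of H^{\<otimes>k} is the set of words b1...bk of basis vectors).
Every vector space has a basis, so this is no loss of generality.
Linear maps are given by their values on basis words and extended linearly by lin.
\<close>

type_synonym ('b,'k) tensor = "'b list \<Rightarrow> 'k"

definition supp :: "('b,'k::zero) tensor \<Rightarrow> 'b list set" where
  "supp x = {u. x u \<noteq> 0}"

definition Tn :: "nat \<Rightarrow> ('b,'k::zero) tensor \<Rightarrow> bool" where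
  "Tn k x \<longleftrightarrow> finite (supp x) \<and> (\<forall>u \<in> supp x. length u = k)"

definition basis :: "'b list \<Rightarrow> ('b,'k::{zero,one}) tensor" where
  "basis u = (\<lambda>w. if w = u then 1 else 0)"

definition lin :: "('b list \<Rightarrow> ('b,'k::comm_ring_1) tensor) \<Rightarrow> ('b,'k) tensor \<Rightarrow> ('b,'k) tensor" where
  "lin f x = (\<lambda>v. \<Sum>u\<in>supp x. x u * f u v)"

definition tprod :: "('b,'k::comm_ring_1) tensor \<Rightarrow> ('b,'k) tensor \<Rightarrow> ('b,'k) tensor" where
  "tprod x y = lin (\<lambda>u. lin (\<lambda>v. basis (u @ v)) y) x"

text \<open>id^{\<otimes>i} \<otimes> f \<otimes> id^{\<otimes>...}: apply f (defined on words of length j) to the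
  tensor factors i+1,...,i+j\<close>
definition atpos :: "nat \<Rightarrow> nat \<Rightarrow> ('b list \<Rightarrow> ('b,'k::comm_ring_1) tensor) \<Rightarrow> 'b list \<Rightarrow> ('b,'k) tensor" where
  "atpos i j f u = tprod (tprod (basis (take i u)) (f (take j (drop i u)))) (basis (drop (i + j) u))"

definition flip2 :: "'b list \<Rightarrow> ('b,'k::comm_ring_1) tensor" where
  "flip2 u = basis [u ! 1, u ! 0]"

text \<open>Structure maps of a Hopf algebra on basis words:
  hmul: H\<otimes>H \<rightarrow> H on words [a,b]; hunit = \<eta>(1) \<in> H; hcomul: H \<rightarrow> H\<otimes>H on words [b];
  hcounit: H \<rightarrow> \<Bbbk> = H^{\<otimes>0} on words [b]; hanti: H \<rightarrow> H on words [b].\<close>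
record ('b,'k) hopf =
  hmul :: "'b list \<Rightarrow> ('b,'k) tensor"
  hunit :: "('b,'k) tensor"
  hcomul :: "'b list \<Rightarrow> ('b,'k) tensor"
  hcounit :: "'b list \<Rightarrow> ('b,'k) tensor"
  hanti :: "'b list \<Rightarrow> ('b,'k) tensor"

definition cocomm_hopf :: "('b,'k::field_char_0) hopf \<Rightarrow> bool" where
  "cocomm_hopf H \<longleftrightarrow>
     (let m = hmul H; e = hunit H; d = hcomul H; c = hcounit H; s = hanti H in
     \<comment> \<open>typing\<close>
     (\<forall>a b. Tn 1 (m [a, b])) \<and> Tn 1 e \<and> (\<forall>b. Tn 2 (d [b])) \<and>
     (\<forall>b. Tn 0 (c [b])) \<and> (\<forall>b. Tn 1 (s [b])) \<and>
     \<comment> \<open>associativity and unit\<close>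
     (\<forall>a b x. lin (atpos 0 2 m) (lin (atpos 0 2 m) (basis [a, b, x]))
             = lin (atpos 0 2 m) (lin (atpos 1 2 m) (basis [a, b, x]))) \<and>
     (\<forall>b. lin (atpos 0 2 m) (tprod e (basis [b])) = basis [b]) \<and>
     (\<forall>b. lin (atpos 0 2 m) (tprod (basis [b]) e) = basis [b]) \<and>
     \<comment> \<open>coassociativity and counit\<close>
     (\<forall>b. lin (atpos 0 1 d) (d [b]) = lin (atpos 1 1 d) (d [b])) \<and>
     (\<forall>b. lin (atpos 0 1 c) (d [b]) = basis [b]) \<and>
     (\<forall>b. lin (atpos 1 1 c) (d [b]) = basis [b]) \<and>
     \<comment> \<open>bialgebra compatibility\<close>
     (\<forall>a b. lin (atpos 0 1 d) (m [a, b]) =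
        lin (atpos 1 2 m) (lin (atpos 0 2 m) (lin (atpos 1 2 flip2) (tprod (d [a]) (d [b]))))) \<and>
     lin (atpos 0 1 d) e = tprod e e \<and>
     (\<forall>a b. lin (atpos 0 1 c) (m [a, b]) = tprod (c [a]) (c [b])) \<and>
     lin (atpos 0 1 c) e = basis [] \<and>
     \<comment> \<open>antipode: m (S \<otimes> id) \<Delta> = \<eta> \<epsilon> = m (id \<otimes> S) \<Delta>\<close>
     (\<forall>b. lin (atpos 0 2 m) (lin (atpos 0 1 s) (d [b])) = lin (\<lambda>_. e) (c [b])) \<and>
     (\<forall>b. lin (atpos 0 2 m) (lin (atpos 1 1 s) (d [b])) = lin (\<lambda>_. e) (c [b])) \<and>
     \<comment> \<open>cocommutativity\<close>
     (\<forall>b. lin flip2 (d [b]) = d [b]))"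

text \<open>Hom_H(G;H): \<phi> is represented by one function on lists of group elements,
  \<phi>_k = \<phi> restricted to lists of length k (extensional outside carrier lists).\<close>
definition HomH :: "('g,'c) monoid_scheme \<Rightarrow> ('b,'k::field_char_0) hopf \<Rightarrow> ('g list \<Rightarrow> ('b,'k) tensor) set" where
  "HomH G H = {phi.
     (\<forall>gs. gs \<notin> lists (carrier G) \<longrightarrow> phi gs = undefined) \<and>
     (\<forall>gs \<in> lists (carrier G). Tn (length gs) (phi gs)) \<and>
     phi [] = basis [] \<and>
     (\<forall>gs \<in> lists (carrier G). \<forall>\<sigma>. \<sigma> permutes {..<length gs} \<longrightarrow>
        phi (map (\<lambda>i. gs ! \<sigma> i) [0..<length gs]) =
        lin (\<lambda>u. basis (map (\<lambda>i. u ! \<sigma> i) [0..<length gs])) (phi gs)) \<and>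
     (\<forall>gs \<in> lists (carrier G). phi (\<one>\<^bsub>G\<^esub> # gs) = tprod (hunit H) (phi gs)) \<and>
     (\<forall>g \<in> carrier G. \<forall>gs \<in> lists (carrier G).
        lin (atpos 0 1 (hcounit H)) (phi (g # gs)) = phi gs) \<and>
     (\<forall>g \<in> carrier G. \<forall>gs \<in> lists (carrier G).
        phi (inv\<^bsub>G\<^esub> g # gs) = lin (atpos 0 1 (hanti H)) (phi (g # gs))) \<and>
     (\<forall>g \<in> carrier G. \<forall>gs \<in> lists (carrier G).
        phi (g # g # gs) = lin (atpos 0 1 (hcomul H)) (phi (g # gs))) \<and>
     (\<forall>g1 \<in> carrier G. \<forall>g2 \<in> carrier G. \<forall>gs \<in> lists (carrier G).
        phi (g1 \<otimes>\<^bsub>G\<^esub> g2 # gs) = lin (atpos 0 2 (hmul H)) (phi (g1 # g2 # gs)))}"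

end

theory Submission
  imports Defs
begin

text \<open>
Two elements \<open>\<phi>, \<psi>\<close> of \<open>Hom\<^sub>\<H>(G;H)\<close> agree on a set of words that is closed under
permuting letters, deleting the first letter (counit), prepending \<open>1\<close> (unit), doubling the first
letter (coproduct), inverting it (antipode) and multiplying the first two letters (product).
Starting from the word \<open>g\<^sub>1 \<dots> g\<^sub>n\<close>, doubling, inverting and multiplying generators lets one
append any element of the subgroup they generate, so the agreement set contains
\<open>g\<^sub>1 \<dots> g\<^sub>n k\<^sub>1 \<dots> k\<^sub>m\<close> for all \<open>k\<^sub>i \<in> G\<close>; deleting the first \<open>n\<close> letters gives
\<open>\<phi>\<^sub>m(k\<^sub>1,\<dots>,k\<^sub>m) = \<psi>\<^sub>m(k\<^sub>1,\<dots>,k\<^sub>m)\<close>.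
\<close>

locale word_closure =
  fixes G :: "('g, 'c) monoid_scheme" and A :: "'g list set"
  assumes mset_closed: "xs \<in> A \<Longrightarrow> mset ys = mset xs \<Longrightarrow> ys \<in> A"
    and Cons_tl: "g # gs \<in> A \<Longrightarrow> gs \<in> A"
    and Cons_one: "gs \<in> A \<Longrightarrow> \<one>\<^bsub>G\<^esub> # gs \<in> A"
    and Cons_dup: "g # gs \<in> A \<Longrightarrow> g # g # gs \<in> A"
    and Cons_inv: "g # gs \<in> A \<Longrightarrow> inv\<^bsub>G\<^esub> g # gs \<in> A"
    and Cons_mult: "g1 # g2 # gs \<in> A \<Longrightarrow> g1 \<otimes>\<^bsub>G\<^esub> g2 # gs \<in> A"
begin

lemma append_tl: "xs @ ys \<in> A \<Longrightarrow> ys \<in> A"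
  by (induction xs) (auto intro: Cons_tl)

lemma append_generate:
  assumes "h \<in> generate G (set gens)" and "gens @ ks \<in> A"
  shows "gens @ h # ks \<in> A"
  using assms
proof (induction h arbitrary: ks rule: generate.induct)
  case one
  have "\<one>\<^bsub>G\<^esub> # gens @ ks \<in> A" using one by (rule Cons_one)
  then show ?case by (rule mset_closed) simp
next
  case (incl h)
  then obtain as bs where gens: "gens = as @ h # bs" by (meson split_list)
  have "h # as @ bs @ ks \<in> A" using mset_closed[OF incl(2)] gens by simp
  then have "h # h # as @ bs @ ks \<in> A" by (rule Cons_dup)
  then show ?case by (rule mset_closed) (simp add: gens)
next
  case (inv h)
  then obtain as bs where gens: "gens = as @ h # bs" by (meson split_list)
  have "h # as @ bs @ ks \<in> A" using mset_closed[OF inv(2)] gens by simp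
  then have "inv\<^bsub>G\<^esub> h # h # as @ bs @ ks \<in> A" by (intro Cons_inv Cons_dup)
  then show ?case by (rule mset_closed) (simp add: gens)
next
  case (eng h1 h2)
  have "gens @ h1 # h2 # ks \<in> A" using eng by blast
  then have "h1 # h2 # gens @ ks \<in> A" by (rule mset_closed) simp
  then have "h1 \<otimes>\<^bsub>G\<^esub> h2 # gens @ ks \<in> A" by (rule Cons_mult)
  then show ?case by (rule mset_closed) simp
qed

lemma lists_generate_subset:
  assumes "gens \<in> A"
  shows "lists (generate G (set gens)) \<subseteq> A"
proof
  fix ks assume "ks \<in> lists (generate G (set gens))"
  then have "gens @ ks \<in> A"
    by (induction ks) (auto simp: assms intro: append_generate)
  then show "ks \<in> A" by (rule append_tl)
qed

end

context
  fixes phi and G :: "('g, 'c) monoid_scheme" and H :: "('b, 'k::field_char_0) hopf"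
  assumes phi: "phi \<in> HomH G H"
begin

lemma HomH_outside: "gs \<notin> lists (carrier G) \<Longrightarrow> phi gs = undefined"
  using phi unfolding HomH_def by blast

lemma HomH_permute_list:
  "gs \<in> lists (carrier G) \<Longrightarrow> p permutes {..<length gs} \<Longrightarrow>
    phi (permute_list p gs) = lin (\<lambda>u. basis (map (\<lambda>i. u ! p i) [0..<length gs])) (phi gs)"
  using phi unfolding HomH_def permute_list_def by blast

lemma HomH_Cons_one: "gs \<in> lists (carrier G) \<Longrightarrow> phi (\<one>\<^bsub>G\<^esub> # gs) = tprod (hunit H) (phi gs)"
  using phi unfolding HomH_def by blast

lemma HomH_counit:
  "g \<in> carrier G \<Longrightarrow> gs \<in> lists (carrier G) \<Longrightarrow>
    lin (atpos 0 1 (hcounit H)) (phi (g # gs)) = phi gs"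
  using phi unfolding HomH_def by blast

lemma HomH_Cons_inv:
  "g \<in> carrier G \<Longrightarrow> gs \<in> lists (carrier G) \<Longrightarrow>
    phi (inv\<^bsub>G\<^esub> g # gs) = lin (atpos 0 1 (hanti H)) (phi (g # gs))"
  using phi unfolding HomH_def by blast

lemma HomH_Cons_dup:
  "g \<in> carrier G \<Longrightarrow> gs \<in> lists (carrier G) \<Longrightarrow>
    phi (g # g # gs) = lin (atpos 0 1 (hcomul H)) (phi (g # gs))"
  using phi unfolding HomH_def by blast

lemma HomH_Cons_mult:
  "g1 \<in> carrier G \<Longrightarrow> g2 \<in> carrier G \<Longrightarrow> gs \<in> lists (carrier G) \<Longrightarrow>
    phi (g1 \<otimes>\<^bsub>G\<^esub> g2 # gs) = lin (atpos 0 2 (hmul H)) (phi (g1 # g2 # gs))"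
  using phi unfolding HomH_def by blast

end

definition agreement_words :: "('g, 'c) monoid_scheme \<Rightarrow> ('g list \<Rightarrow> 'x) \<Rightarrow> ('g list \<Rightarrow> 'x) \<Rightarrow> 'g list set"
  where "agreement_words G phi psi = {gs \<in> lists (carrier G). phi gs = psi gs}"

lemma HomH_agreement_word_closure:
  assumes "group G" and phi: "phi \<in> HomH G H" and psi: "psi \<in> HomH G H"
  shows "word_closure G (agreement_words G phi psi)"
proof -
  interpret group G by fact
  show ?thesis
    unfolding agreement_words_def
  proof
    fix xs ys
    assume xs: "xs \<in> {gs \<in> lists (carrier G). phi gs = psi gs}" and mset: "mset ys = mset xs"
    then obtain p where p: "p permutes {..<length xs}" and ys: "permute_list p xs = ys"
      using mset_eq_permutation by blast
    have "set ys = set xs" using mset by (metis set_mset_mset)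
    with xs p show "ys \<in> {gs \<in> lists (carrier G). phi gs = psi gs}"
      by (auto simp: ys[symmetric] HomH_permute_list[OF phi] HomH_permute_list[OF psi])
  next
    fix g gs
    assume "g # gs \<in> {gs \<in> lists (carrier G). phi gs = psi gs}"
    then show "gs \<in> {gs \<in> lists (carrier G). phi gs = psi gs}"
      using HomH_counit[OF phi, of g gs] HomH_counit[OF psi, of g gs] by auto
  next
    fix gs
    assume "gs \<in> {gs \<in> lists (carrier G). phi gs = psi gs}"
    then show "\<one>\<^bsub>G\<^esub> # gs \<in> {gs \<in> lists (carrier G). phi gs = psi gs}"
      by (simp add: HomH_Cons_one[OF phi] HomH_Cons_one[OF psi])
  next
    fix g gs
    assume "g # gs \<in> {gs \<in> lists (carrier G). phi gs = psi gs}"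
    then show "g # g # gs \<in> {gs \<in> lists (carrier G). phi gs = psi gs}"
      by (simp add: HomH_Cons_dup[OF phi] HomH_Cons_dup[OF psi])
  next
    fix g gs
    assume "g # gs \<in> {gs \<in> lists (carrier G). phi gs = psi gs}"
    then show "inv\<^bsub>G\<^esub> g # gs \<in> {gs \<in> lists (carrier G). phi gs = psi gs}"
      by (simp add: HomH_Cons_inv[OF phi] HomH_Cons_inv[OF psi])
  next
    fix g1 g2 gs
    assume "g1 # g2 # gs \<in> {gs \<in> lists (carrier G). phi gs = psi gs}"
    then show "g1 \<otimes>\<^bsub>G\<^esub> g2 # gs \<in> {gs \<in> lists (carrier G). phi gs = psi gs}"
      by (simp add: HomH_Cons_mult[OF phi] HomH_Cons_mult[OF psi])
  qed
qed

theorem mainTheorem2: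
  fixes G :: "('g, 'c) monoid_scheme" and H :: "('b, 'k::field_char_0) hopf"
    and gens :: "'g list"
  assumes "group G"
    and "set gens \<subseteq> carrier G"
    and "generate G (set gens) = carrier G"
    and "cocomm_hopf H"
  shows "inj_on (\<lambda>phi. phi gens) (HomH G H)"
proof (rule inj_onI)
  fix phi psi
  assume phi: "phi \<in> HomH G H" and psi: "psi \<in> HomH G H" and "phi gens = psi gens"
  interpret word_closure G "agreement_words G phi psi"
    using HomH_agreement_word_closure[OF assms(1) phi psi] .
  have "gens \<in> agreement_words G phi psi"
    using assms(2) \<open>phi gens = psi gens\<close> by (auto simp: agreement_words_def)
  from lists_generate_subset[OF this]
  have "phi gs = psi gs" if "gs \<in> lists (carrier G)" for gs
    using that unfolding assms(3) agreement_words_def by blast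
  moreover have "phi gs = psi gs" if "gs \<notin> lists (carrier G)" for gs
    using that HomH_outside[OF phi] HomH_outside[OF psi] by simp
  ultimately show "phi = psi" by blast
qed

end
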